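(* Let $\varphi$ be a hexagonal grid. For a triangle $\mathcal{T}_i$ of the grid, listed as $(\varphi(\{p,q\}),\varphi(\{q,s\}),\varphi(\{s,p\}))$ with $p,q,s$ counterclockwise, let $a_i,b_i,c_i$ be its side lengths and $S_i$ twice its signed area (positive if the listed vertices are counterclockwise). Then the quantity $$a_i^2+b_i^2+c_i^2-2\sqrt3\,S_i$$ takes the same value for all triangles $\mathcal{T}_i$ of the grid.
   Context: Let $\zeta=e^{i\pi/3}$ and $\Lambda=\{m+n\zeta: m,n\in\mathbb{Z}\}$. Call $p,q\in\Lambda$ adjacent if $|p-q|=1$, and let $\mathcal{E}$ be the set of unordered pairs $\{p,q\}$ of adjacent lattice points. A hexagonal grid is a map $\varphi:\mathcal{E}\to\mathbb{C}$ such that for every $p\in\Lambda$ there exist $c_p,r_p\in\mathbb{C}$ with $\varphi(\{p,p+\zeta^k\})=c_p+r_p\zeta^k$ for $k=0,\dots,5$. Thus the six points form a regular, possibly degenerate, hexagon $H_p$ listed counterclockwise. For each set $\{p,q,s\}\subset\Lambda$ of three pairwise adjacent lattice points listed counterclockwise, the corresponding triangle of the grid is $(\varphi(\{p,q\}),\varphi(\{q,s\}),\varphi(\{s,p\}))$. The reference triangle of $\varphi$ is $(\varphi(\{0,1\}),\varphi(\{1,\zeta\}),\varphi(\{\zeta,0\}))$. *)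

theory Defs
  imports Complex_Main
begin

definition zeta :: complex where
  "zeta = exp (\<i> * of_real (pi / 3))"

definition lattice :: "complex set" where
  "lattice = {of_int m + of_int n * zeta | m n. True}"

definition adjacent :: "complex \<Rightarrow> complex \<Rightarrow> bool" where
  "adjacent p q \<longleftrightarrow> p \<in> lattice \<and> q \<in> lattice \<and> cmod (p - q) = 1"

text \<open>Edges are unordered pairs, represented as two-element sets; a grid is a map
  from such sets to complex numbers (values on non-edges are irrelevant).\<close>

definition hex_grid :: "(complex set \<Rightarrow> complex) \<Rightarrow> bool" where
  "hex_grid \<phi> \<longleftrightarrow> (\<forall>p\<in>lattice. \<exists>c r. \<forall>k::nat<6. \<phi> {p, p + zeta ^ k} = c + r * zeta ^ k)"

definition signed_area2 :: "complex \<Rightarrow> complex \<Rightarrow> complex \<Rightarrow> real" where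
  "signed_area2 A B C = Im (cnj (B - A) * (C - A))"

definition ccw_triple :: "complex \<Rightarrow> complex \<Rightarrow> complex \<Rightarrow> bool" where
  "ccw_triple p q s \<longleftrightarrow> adjacent p q \<and> adjacent q s \<and> adjacent s p \<and> signed_area2 p q s > 0"

definition grid_triangle :: "(complex set \<Rightarrow> complex) \<Rightarrow> complex \<Rightarrow> complex \<Rightarrow> complex
    \<Rightarrow> complex \<times> complex \<times> complex" where
  "grid_triangle \<phi> p q s = (\<phi> {p, q}, \<phi> {q, s}, \<phi> {s, p})"

definition tri_quantity :: "complex \<times> complex \<times> complex \<Rightarrow> real" where
  "tri_quantity T = (case T of (A, B, C) \<Rightarrow>
     (cmod (B - C))\<^sup>2 + (cmod (C - A))\<^sup>2 + (cmod (A - B))\<^sup>2 - 2 * sqrt 3 * signed_area2 A B C)"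

end

theory Submission
  imports Defs
begin

text \<open>Write \<phi>{p, p + \<zeta>^k} = c(p) + r(p) \<zeta>^k. An edge belongs to the hexagons at both of its
  endpoints, so c(p + v) - c(p) = (r(p) + r(p + v)) v for every unit step v. Summing this around
  a unit triangle p, p + u, p + u\<zeta> gives r(p + u\<zeta>) - r(p) = \<zeta> (r(p + u) - r(p)), hence
  r(p + \<zeta>^k) - r(p) = \<zeta>^k D(p) with D(p) = r(p + 1) - r(p); reading an edge in both directions
  shows that D is constant, i.e. the radii depend affinely on the lattice point.
  On the other hand a^2 + b^2 + c^2 - 2\<surd>3 S = 2 |A + \<zeta>^2 B + \<zeta>^4 C|^2, and for the grid triangle
  at p, p + u, p + u\<zeta> the sum inside the modulus is -u (r(p + u) - r(p)). So every triangle of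
  the grid has the value 2 |D|^2.\<close>

lemma zeta_eq_Complex: "zeta = Complex (1/2) (sqrt 3 / 2)"
  unfolding zeta_def by (simp add: complex_eq_iff cos_60 sin_60 Re_exp Im_exp)

lemma zeta_squared: "zeta^2 = zeta - 1"
  by (simp add: zeta_eq_Complex complex_eq_iff power2_eq_square)

lemma zeta_cubed: "zeta^3 = -1"
  by (simp add: power3_eq_cube power2_eq_square[symmetric] zeta_squared algebra_simps)

lemma zeta_pow_4: "zeta^4 = - zeta"
  using zeta_cubed by (simp add: power_Suc2 numeral_eq_Suc del: power_Suc)

lemma zeta_pow_add_3: "zeta ^ (k + 3) = - (zeta ^ k)"
  by (simp add: power_add zeta_cubed)

lemma zeta_pow_mod_6: "zeta ^ (k mod 6) = zeta ^ k"
proof -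
  have "zeta ^ 6 = 1"
    using power_mult[of zeta 3 2] by (simp add: zeta_cubed)
  then have "zeta ^ k = zeta ^ (6 * (k div 6) + k mod 6)"
    by simp
  also have "\<dots> = zeta ^ (k mod 6)"
    unfolding power_add power_mult \<open>zeta ^ 6 = 1\<close> by simp
  finally show ?thesis ..
qed

lemma norm_zeta [simp]: "cmod zeta = 1"
  by (simp add: zeta_eq_Complex cmod_def power_divide)

lemma zeta_nonzero [simp]: "zeta \<noteq> 0"
  using norm_zeta by force

lemma tri_quantity_eq_norm_sum:
  "tri_quantity (A, B, C) = 2 * (cmod (A + zeta^2 * B + zeta^4 * C))\<^sup>2"
proof -
  have "tri_quantity (A, B, C) = 2 * (cmod ((A - C) + zeta^2 * (B - C)))\<^sup>2"
    unfolding tri_quantity_def signed_area2_def cmod_power2 zeta_squared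
    by (simp add: zeta_eq_Complex power2_eq_square algebra_simps)
  also have "(A - C) + zeta^2 * (B - C) = A + zeta^2 * B + zeta^4 * C"
    by (simp add: zeta_squared zeta_pow_4 algebra_simps)
  finally show ?thesis .
qed

lemma lattice_iff: "p \<in> lattice \<longleftrightarrow> (\<exists>m n. p = of_int m + of_int n * zeta)"
  unfolding lattice_def by blast

lemma lattice_diff:
  assumes "p \<in> lattice" "q \<in> lattice"
  shows "p - q \<in> lattice"
proof -
  obtain m n m' n' where "p = of_int m + of_int n * zeta" "q = of_int m' + of_int n' * zeta"
    using assms unfolding lattice_iff by blast
  then have "p - q = of_int (m - m') + of_int (n - n') * zeta"
    by (simp add: algebra_simps)
  then show ?thesis
    unfolding lattice_iff by blast
qed

lemma lattice_add:
  assumes "p \<in> lattice" "q \<in> lattice"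
  shows "p + q \<in> lattice"
proof -
  obtain m n m' n' where "p = of_int m + of_int n * zeta" "q = of_int m' + of_int n' * zeta"
    using assms unfolding lattice_iff by blast
  then have "p + q = of_int (m + m') + of_int (n + n') * zeta"
    by (simp add: algebra_simps)
  then show ?thesis
    unfolding lattice_iff by blast
qed

lemma lattice_mult_zeta:
  assumes "p \<in> lattice"
  shows "p * zeta \<in> lattice"
proof -
  obtain m n where "p = of_int m + of_int n * zeta"
    using assms unfolding lattice_iff by blast
  then have "p * zeta = of_int m * zeta + of_int n * zeta ^ 2"
    by (simp add: power2_eq_square algebra_simps)
  also have "\<dots> = of_int (- n) + of_int (m + n) * zeta"
    by (simp add: zeta_squared algebra_simps)
  finally show ?thesis
    unfolding lattice_iff by blast
qed

lemma zeta_pow_in_lattice: "zeta ^ k \<in> lattice"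
proof (induction k)
  case 0
  have "1 = of_int 1 + of_int 0 * zeta"
    by simp
  then show ?case
    unfolding lattice_iff by (metis power_0)
next
  case (Suc k)
  then show ?case
    unfolding power_Suc2 by (rule lattice_mult_zeta)
qed

lemma lattice_add_zeta_pow: "p \<in> lattice \<Longrightarrow> p + zeta ^ k \<in> lattice"
  by (simp add: lattice_add zeta_pow_in_lattice)

lemma lattice_induct [consumes 1, case_names zero step]:
  assumes "p \<in> lattice" and "P 0"
    and step: "\<And>p k. p \<in> lattice \<Longrightarrow> P p \<Longrightarrow> P (p + zeta ^ k)"
  shows "P p"
proof -
  have in_lattice: "of_int m + of_int n * zeta \<in> lattice" for m n
    unfolding lattice_iff by blast
  have real_axis: "P (of_int m)" for m
  proof (induction m rule: int_induct[of _ 0])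
    case (step1 i)
    then show ?case
      using step[of "of_int i" 0] in_lattice[of i 0] by simp
  next
    case (step2 i)
    then show ?case
      using step[of "of_int i" 3] in_lattice[of i 0] zeta_cubed by simp
  qed (simp add: \<open>P 0\<close>)
  have "P (of_int m + of_int n * zeta)" for m n
  proof (induction n rule: int_induct[of _ 0])
    case (step1 i)
    then show ?case
      using step[of "of_int m + of_int i * zeta" 1] in_lattice[of m i] by (simp add: algebra_simps)
  next
    case (step2 i)
    then show ?case
      using step[of "of_int m + of_int i * zeta" 4] in_lattice[of m i] zeta_pow_4
      by (simp add: algebra_simps)
  qed (simp add: real_axis)
  then show ?thesis
    using \<open>p \<in> lattice\<close> unfolding lattice_iff by blast
qed

lemma norm_square_lattice_point:
  "(cmod (of_int m + of_int n * zeta))\<^sup>2 = of_int (m\<^sup>2 + m * n + n\<^sup>2)"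
  unfolding cmod_power2 zeta_eq_Complex by (simp add: power2_eq_square algebra_simps)

lemma unit_lattice_point_eq_zeta_pow:
  assumes "v \<in> lattice" and "cmod v = 1"
  obtains k where "v = zeta ^ k"
proof -
  obtain m n where v: "v = of_int m + of_int n * zeta"
    using \<open>v \<in> lattice\<close> unfolding lattice_iff by blast
  have norm: "m\<^sup>2 + m * n + n\<^sup>2 = 1"
    by (metis norm_square_lattice_point \<open>cmod v = 1\<close> v one_power2 of_int_eq_1_iff)
  have "(2 * m + n)\<^sup>2 + 3 * n\<^sup>2 = 4" "(2 * n + m)\<^sup>2 + 3 * m\<^sup>2 = 4"
    using norm by (simp_all add: power2_eq_square algebra_simps)
  then have "m\<^sup>2 \<le> 1" "n\<^sup>2 \<le> 1"
    by (smt (verit) zero_le_power2)+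
  then have "\<bar>m\<bar> \<le> 1" "\<bar>n\<bar> \<le> 1"
    by (simp_all add: abs_square_le_1)
  then have "m \<in> {-1, 0, 1}" "n \<in> {-1, 0, 1}"
    by auto
  then have "v \<in> {zeta ^ 0, zeta ^ 1, zeta ^ 2, zeta ^ 3, zeta ^ 4, zeta ^ 5}"
    using norm v zeta_squared zeta_cubed zeta_pow_4 zeta_pow_add_3[of 2] by (auto simp: power2_eq_square)
  then show ?thesis
    using that by blast
qed

lemma unit_triangle_ccw_eq_mult_zeta:
  assumes "cmod u = 1" "cmod w = 1" "cmod (w - u) = 1" and "Im (cnj u * w) > 0"
  shows "w = u * zeta"
proof -
  define z where "z = cnj u * w"
  have "(cmod (w - u))\<^sup>2 = (cmod w)\<^sup>2 + (cmod u)\<^sup>2 - 2 * Re z"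
    unfolding z_def cmod_power2 by (simp add: power2_eq_square algebra_simps)
  then have re: "Re z = 1 / 2"
    using assms(1-3) by simp
  have "cmod z = 1"
    using assms(1,2) by (simp add: z_def norm_mult)
  then have "(Re z)\<^sup>2 + (Im z)\<^sup>2 = 1"
    by (simp flip: cmod_power2)
  then have "(Im z)\<^sup>2 = (sqrt 3 / 2)\<^sup>2"
    using re by (simp add: power_divide)
  then have "Im z = sqrt 3 / 2"
    using assms(4) unfolding z_def by (simp add: power2_eq_iff_nonneg)
  then have "z = zeta"
    using re by (simp add: zeta_eq_Complex complex_eq_iff)
  moreover have "u * cnj u = 1"
    using assms(1) by (simp add: complex_norm_square[symmetric])
  ultimately show ?thesis
    unfolding z_def by (metis mult.assoc mult_1)
qed

lemma ccw_triple_imp_zeta_pow: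
  assumes "ccw_triple p q s"
  obtains k where "p \<in> lattice" "q = p + zeta ^ k" "s = p + zeta ^ Suc k"
proof -
  have lattice: "p \<in> lattice" "q \<in> lattice" "s \<in> lattice"
    and norms: "cmod (q - p) = 1" "cmod (s - p) = 1" "cmod (s - q) = 1"
    and area: "Im (cnj (q - p) * (s - p)) > 0"
    using assms unfolding ccw_triple_def adjacent_def signed_area2_def
    by (auto simp: norm_minus_commute)
  obtain k where k: "q - p = zeta ^ k"
    using unit_lattice_point_eq_zeta_pow lattice_diff lattice norms(1) by metis
  have "s - p = (q - p) * zeta"
    using unit_triangle_ccw_eq_mult_zeta[of "q - p" "s - p"] norms area by simp
  then have "s = p + zeta ^ Suc k"
    unfolding k by (simp add: power_Suc2 algebra_simps)
  moreover have "q = p + zeta ^ k"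
    using k by (simp add: algebra_simps)
  ultimately show ?thesis
    using that lattice by blast
qed

locale hexagon_parameters =
  fixes \<phi> :: "complex set \<Rightarrow> complex" and c r :: "complex \<Rightarrow> complex"
  assumes edge_value: "p \<in> lattice \<Longrightarrow> \<phi> {p, p + zeta ^ k} = c p + r p * zeta ^ k"

lemma hex_grid_imp_hexagon_parameters:
  assumes "hex_grid \<phi>"
  obtains c r where "hexagon_parameters \<phi> c r"
proof -
  have "\<forall>p\<in>lattice. \<exists>cr. \<forall>k. \<phi> {p, p + zeta ^ k} = fst cr + snd cr * zeta ^ k"
  proof
    fix p assume "p \<in> lattice"
    then obtain c r where "\<forall>k<6. \<phi> {p, p + zeta ^ k} = c + r * zeta ^ k"
      using assms unfolding hex_grid_def by blast
    then have "\<phi> {p, p + zeta ^ k} = c + r * zeta ^ k" for k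
      using zeta_pow_mod_6[of k] by (metis mod_less_divisor zero_less_numeral)
    then show "\<exists>cr. \<forall>k. \<phi> {p, p + zeta ^ k} = fst cr + snd cr * zeta ^ k"
      by (intro exI[of _ "(c, r)"]) simp
  qed
  then obtain cr where "\<forall>p\<in>lattice. \<forall>k. \<phi> {p, p + zeta ^ k} = fst (cr p) + snd (cr p) * zeta ^ k"
    by metis
  then have "hexagon_parameters \<phi> (fst \<circ> cr) (snd \<circ> cr)"
    by unfold_locales simp
  then show ?thesis
    using that by blast
qed

context hexagon_parameters
begin

lemma center_diff:
  assumes "p \<in> lattice"
  shows "c (p + zeta ^ k) - c p = (r p + r (p + zeta ^ k)) * zeta ^ k"
proof -
  define q where "q = p + zeta ^ k"
  have "q + zeta ^ (k + 3) = p"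
    unfolding q_def zeta_pow_add_3 by simp
  then have "\<phi> {p, q} = c q - r q * zeta ^ k"
    using edge_value[of q "k + 3"] lattice_add_zeta_pow[OF assms]
    by (simp add: q_def zeta_pow_add_3 insert_commute)
  moreover have "\<phi> {p, q} = c p + r p * zeta ^ k"
    unfolding q_def using edge_value[OF assms] .
  ultimately show ?thesis
    unfolding q_def[symmetric] by (simp add: algebra_simps)
qed

lemma radius_diff_rotate:
  assumes "p \<in> lattice"
  shows "r (p + zeta ^ Suc k) - r p = zeta * (r (p + zeta ^ k) - r p)"
proof -
  define u where "u = zeta ^ k"
  define q where "q = p + u"
  define s where "s = p + u * zeta"
  have "q \<in> lattice" "s \<in> lattice"
    unfolding q_def s_def u_def using assms lattice_add_zeta_pow
    by (metis power_Suc2)+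
  have z2: "zeta ^ (k + 2) = u * (zeta - 1)" and z4: "zeta ^ (k + 4) = - (u * zeta)"
    unfolding u_def power_add zeta_squared zeta_pow_4 by simp_all
  have qs: "q + zeta ^ (k + 2) = s" and sp: "s + zeta ^ (k + 4) = p"
    unfolding z2 z4 s_def q_def by (simp_all add: algebra_simps)
  have "- u * ((r s - r p) - zeta * (r q - r p))
      = (r p + r q) * u + (r q + r s) * (u * (zeta - 1)) + (r s + r p) * - (u * zeta)"
    by (simp add: algebra_simps)
  also have "\<dots> = (c q - c p) + (c s - c q) + (c p - c s)"
    using center_diff[OF assms, of k]
      center_diff[OF \<open>q \<in> lattice\<close>, of "k + 2", unfolded qs, unfolded z2]
      center_diff[OF \<open>s \<in> lattice\<close>, of "k + 4", unfolded sp, unfolded z4]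
    by (simp add: q_def u_def)
  finally have "u * ((r s - r p) - zeta * (r q - r p)) = 0"
    by simp
  then show ?thesis
    unfolding power_Suc2 u_def[symmetric] q_def[symmetric] s_def[symmetric]
    by (simp add: u_def)
qed

lemma radius_diff_eq:
  assumes "p \<in> lattice"
  shows "r (p + zeta ^ k) - r p = zeta ^ k * (r (p + 1) - r p)"
proof (induction k)
  case (Suc k)
  then show ?case
    using radius_diff_rotate[OF assms, of k] by simp
qed simp

lemma radius_step_shift:
  assumes "p \<in> lattice"
  shows "r (p + zeta ^ k + 1) - r (p + zeta ^ k) = r (p + 1) - r p"
proof -
  define q where "q = p + zeta ^ k"
  have "q + zeta ^ (k + 3) = p"
    unfolding q_def zeta_pow_add_3 by simp
  then have "r q - r p = zeta ^ k * (r (q + 1) - r q)"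
    using radius_diff_eq[of q "k + 3"] lattice_add_zeta_pow[OF assms]
    by (simp add: q_def zeta_pow_add_3 algebra_simps)
  moreover have "r q - r p = zeta ^ k * (r (p + 1) - r p)"
    unfolding q_def using radius_diff_eq[OF assms] .
  ultimately show ?thesis
    unfolding q_def[symmetric] by simp
qed

lemma radius_step_const:
  assumes "p \<in> lattice"
  shows "r (p + 1) - r p = r 1 - r 0"
  using assms
proof (induction rule: lattice_induct)
  case zero
  show ?case by simp
next
  case (step p k)
  then show ?case
    using radius_step_shift by simp
qed

lemma tri_quantity_grid_triangle:
  assumes "p \<in> lattice"
  shows "tri_quantity (grid_triangle \<phi> p (p + zeta ^ k) (p + zeta ^ Suc k))
    = 2 * (cmod (r 1 - r 0))\<^sup>2"
proof -
  define u where "u = zeta ^ k"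
  define q where "q = p + u"
  have "q \<in> lattice"
    unfolding q_def u_def using lattice_add_zeta_pow[OF assms] .
  have z2: "zeta ^ (k + 2) = u * zeta ^ 2"
    unfolding u_def by (simp only: power_add)
  have qs: "q + zeta ^ (k + 2) = p + zeta ^ Suc k"
    unfolding q_def z2 u_def zeta_squared by (simp add: algebra_simps)
  have A: "\<phi> {p, q} = c p + r p * u"
    unfolding q_def u_def using edge_value[OF assms] .
  have B: "\<phi> {q, p + zeta ^ Suc k} = c p + (r p + r q) * u + r q * u * zeta ^ 2"
    using edge_value[OF \<open>q \<in> lattice\<close>, of "k + 2", unfolded qs, unfolded z2]
      center_diff[OF assms, of k]
    by (simp add: q_def u_def algebra_simps)
  have C: "\<phi> {p + zeta ^ Suc k, p} = c p + r p * u * zeta"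
    using edge_value[OF assms, of "Suc k"] by (simp add: u_def insert_commute power_Suc2)
  have "\<phi> {p, q} + zeta ^ 2 * \<phi> {q, p + zeta ^ Suc k} + zeta ^ 4 * \<phi> {p + zeta ^ Suc k, p}
      = - u * (r q - r p)"
    unfolding A B C zeta_pow_4 using zeta_squared by algebra
  moreover have "cmod (- u * (r q - r p)) = cmod (r 1 - r 0)"
    using radius_step_const[OF assms] radius_diff_eq[OF assms, of k]
    by (simp add: q_def u_def norm_mult norm_power)
  ultimately show ?thesis
    unfolding grid_triangle_def tri_quantity_eq_norm_sum q_def u_def by simp
qed

end

theorem mainTheorem15:
  fixes \<phi> :: "complex set \<Rightarrow> complex"
  assumes "hex_grid \<phi>"
    and "ccw_triple p q s" and "ccw_triple p' q' s'"
  shows "tri_quantity (grid_triangle \<phi> p q s) = tri_quantity (grid_triangle \<phi> p' q' s')"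
proof -
  obtain c r where "hexagon_parameters \<phi> c r"
    using hex_grid_imp_hexagon_parameters[OF assms(1)] .
  then interpret hexagon_parameters \<phi> c r .
  obtain k where "p \<in> lattice" "q = p + zeta ^ k" "s = p + zeta ^ Suc k"
    using ccw_triple_imp_zeta_pow[OF assms(2)] .
  moreover obtain k' where "p' \<in> lattice" "q' = p' + zeta ^ k'" "s' = p' + zeta ^ Suc k'"
    using ccw_triple_imp_zeta_pow[OF assms(3)] .
  ultimately show ?thesis
    using tri_quantity_grid_triangle by simp
qed

end
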